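(* Let $n$ be an odd positive integer. Then $d_{\mathrm{GED}}(T_{\mathrm{ord}}, T_{\mathrm{rps}}) = \frac{1}{8}(n^2-1)$, where $T_{\mathrm{ord}}$ and $T_{\mathrm{rps}}$ are the ordered and rock-paper-scissors tournaments on $n$ players defined below.
   Context: A tournament on a finite set $V$ of players is a directed graph with vertex set $V$ such that for every two distinct vertices $u,v$ there is exactly one of the edges $(u,v)$, $(v,u)$; the edge $(u,v)$ means that $u$ beats $v$. Two tournaments $(V_1,E_1)$ and $(V_2,E_2)$ are isomorphic if there is a bijection $\pi\colon V_1\to V_2$ with $(u,v)\in E_1$ iff $(\pi(u),\pi(v))\in E_2$. For tournaments $T_1,T_2$ on the same number of players, the graph edit distance $d_{\mathrm{GED}}(T_1,T_2)$ is the minimum number of edges of $T_1$ whose orientation must be reversed so that the resulting tournament is isomorphic to $T_2$. The ordered tournament $T_{\mathrm{ord}}$ on $n$ players is the transitive tournament: the players are $v_1,\dots,v_n$ and $v_i$ beats $v_j$ whenever $i<j$. The tournament $T_{\mathrm{rps}}$ on $n$ players has players $v_0,\dots,v_{n-1}$ and, for each $i\in\{0,\dots,n-1\}$, edges from $v_i$ to each of $v_{(i+1)\bmod n},\dots,v_{(i+\lfloor n/2\rfloor)\bmod n}$ (for odd $n$ this is well defined and every player beats exactly $(n-1)/2$ others). *)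

theory Defs
  imports Main
begin

text \<open>A tournament is a pair (V, E) with E a set of directed edges: (u,v) in E means u beats v.\<close>

definition tournament :: "'a set \<Rightarrow> ('a \<times> 'a) set \<Rightarrow> bool" where
  "tournament V E \<longleftrightarrow> finite V \<and> E \<subseteq> V \<times> V \<and>
     (\<forall>u\<in>V. \<forall>v\<in>V. u \<noteq> v \<longrightarrow> ((u, v) \<in> E \<longleftrightarrow> (v, u) \<notin> E)) \<and>
     (\<forall>u\<in>V. (u, u) \<notin> E)"

definition tourn_iso :: "'a set \<Rightarrow> ('a \<times> 'a) set \<Rightarrow> 'b set \<Rightarrow> ('b \<times> 'b) set \<Rightarrow> bool" where
  "tourn_iso V1 E1 V2 E2 \<longleftrightarrow> (\<exists>\<pi>. bij_betw \<pi> V1 V2 \<and>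
     (\<forall>u\<in>V1. \<forall>v\<in>V1. (u, v) \<in> E1 \<longleftrightarrow> (\<pi> u, \<pi> v) \<in> E2))"

definition reverse_edges :: "('a \<times> 'a) set \<Rightarrow> ('a \<times> 'a) set \<Rightarrow> ('a \<times> 'a) set" where
  "reverse_edges E F = (E - F) \<union> F\<inverse>"

definition d_GED :: "'a set \<Rightarrow> ('a \<times> 'a) set \<Rightarrow> 'b set \<Rightarrow> ('b \<times> 'b) set \<Rightarrow> nat" where
  "d_GED V1 E1 V2 E2 = (LEAST k. \<exists>F. F \<subseteq> E1 \<and> card F = k \<and>
      tourn_iso V1 (reverse_edges E1 F) V2 E2)"

text \<open>Ordered (transitive) tournament on players v_1..v_n, represented by 1..n.\<close>
definition T_ord_V :: "nat \<Rightarrow> nat set" where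
  "T_ord_V n = {1..n}"
definition T_ord_E :: "nat \<Rightarrow> (nat \<times> nat) set" where
  "T_ord_E n = {(i, j). i \<in> {1..n} \<and> j \<in> {1..n} \<and> i < j}"

text \<open>Rock-paper-scissors tournament on players v_0..v_{n-1}, represented by 0..n-1:
  v_i beats v_{(i+k) mod n} for k = 1..floor(n/2).\<close>
definition T_rps_V :: "nat \<Rightarrow> nat set" where
  "T_rps_V n = {0..<n}"
definition T_rps_E :: "nat \<Rightarrow> (nat \<times> nat) set" where
  "T_rps_E n = {(i, (i + k) mod n) | i k. i < n \<and> 1 \<le> k \<and> k \<le> n div 2}"

end

theory Submission
  imports Defs
begin

text \<open>Write \<open>n = 2m + 1\<close>. Reversing the edges \<open>(i, j)\<close> with \<open>j > i + m\<close> turns the ordered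
  tournament into the rock-paper-scissors tournament relabelled by \<open>i \<mapsto> i - 1\<close>, and these are
  \<open>m(m+1)/2\<close> edges. Conversely, in any tournament isomorphic to \<open>T\<^sub>r\<^sub>p\<^sub>s\<close> every player has
  out-degree \<open>m\<close>, so the top \<open>m\<close> players, who win \<open>m(m-1)/2\<close> games among themselves, win only
  \<open>m\<^sup>2 - m(m-1)/2\<close> of the \<open>m(m+1)\<close> games against the other players, all of which they win in
  \<open>T\<^sub>o\<^sub>r\<^sub>d\<close>: at least \<open>m(m+1)/2\<close> edges must have been reversed.\<close>

definition out_degree :: "'a set \<Rightarrow> ('a \<times> 'a) set \<Rightarrow> 'a \<Rightarrow> nat" where
  "out_degree V E u = card {v \<in> V. (u, v) \<in> E}"

lemma tournament_card_edges_within: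
  assumes "tournament V E" and "A \<subseteq> V"
  shows "2 * card (E \<inter> A \<times> A) = card A * (card A - 1)"
proof -
  let ?I = "E \<inter> A \<times> A" and ?diag = "(\<lambda>x. (x, x)) ` A"
  have fin: "finite A"
    using assms finite_subset unfolding tournament_def by blast
  have asym: "(u, v) \<in> E \<longleftrightarrow> (v, u) \<notin> E" if "u \<in> A" "v \<in> A" "u \<noteq> v" for u v
    using assms that unfolding tournament_def by blast
  have irrefl: "(u, u) \<notin> E" if "u \<in> A" for u
    using assms that unfolding tournament_def by blast
  have partition: "?I \<union> ?I\<inverse> = A \<times> A - ?diag"
    using asym irrefl by auto
  have disjoint: "?I \<inter> ?I\<inverse> = {}"
    using asym irrefl by auto
  have "card (A \<times> A - ?diag) = card A * card A - card A"
    using fin by (subst card_Diff_subset) (auto simp: card_image card_cartesian_product inj_on_def)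
  moreover have "card (?I \<union> ?I\<inverse>) = 2 * card ?I"
    using fin disjoint by (subst card_Un_disjoint) auto
  ultimately show ?thesis
    using partition by (simp add: diff_mult_distrib2)
qed

lemma sum_out_degree_eq:
  assumes "finite V" and "A \<subseteq> V"
  shows "(\<Sum>u\<in>A. out_degree V E u) = card (E \<inter> A \<times> A) + card (E \<inter> A \<times> (V - A))"
proof -
  have fin: "finite A" using assms finite_subset by blast
  have "(\<Sum>u\<in>A. out_degree V E u) = card (SIGMA u:A. {v \<in> V. (u, v) \<in> E})"
    using assms fin unfolding out_degree_def by simp
  also have "(SIGMA u:A. {v \<in> V. (u, v) \<in> E}) = (E \<inter> A \<times> A) \<union> (E \<inter> A \<times> (V - A))"
    using assms by auto
  also have "card \<dots> = card (E \<inter> A \<times> A) + card (E \<inter> A \<times> (V - A))"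
    using assms fin by (intro card_Un_disjoint) (auto intro: finite_subset[of _ "A \<times> V"])
  finally show ?thesis .
qed

lemma tournament_if_tourn_iso:
  assumes "tourn_iso V1 E1 V2 E2" and "tournament V2 E2" and "E1 \<subseteq> V1 \<times> V1"
  shows "tournament V1 E1"
proof -
  obtain \<pi> where \<pi>: "bij_betw \<pi> V1 V2" "\<forall>u\<in>V1. \<forall>v\<in>V1. (u, v) \<in> E1 \<longleftrightarrow> (\<pi> u, \<pi> v) \<in> E2"
    using assms(1) unfolding tourn_iso_def by blast
  have "finite V1"
    using \<pi>(1) assms(2) bij_betw_finite unfolding tournament_def by blast
  moreover have "(u, v) \<in> E1 \<longleftrightarrow> (v, u) \<notin> E1" if "u \<in> V1" "v \<in> V1" "u \<noteq> v" for u v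
  proof -
    have "\<pi> u \<in> V2" "\<pi> v \<in> V2" "\<pi> u \<noteq> \<pi> v"
      using \<pi>(1) that by (auto simp: bij_betw_def inj_on_eq_iff)
    then show ?thesis
      using assms(2) \<pi>(2) that unfolding tournament_def by blast
  qed
  moreover have "(u, u) \<notin> E1" if "u \<in> V1" for u
    using assms(2) \<pi> bij_betw_apply that unfolding tournament_def by blast
  ultimately show ?thesis
    using assms(3) unfolding tournament_def by blast
qed

lemma out_degree_if_tourn_iso:
  assumes "tourn_iso V1 E1 V2 E2" and "\<forall>w\<in>V2. out_degree V2 E2 w = d" and "u \<in> V1"
  shows "out_degree V1 E1 u = d"
proof -
  obtain \<pi> where \<pi>: "bij_betw \<pi> V1 V2" "\<forall>u\<in>V1. \<forall>v\<in>V1. (u, v) \<in> E1 \<longleftrightarrow> (\<pi> u, \<pi> v) \<in> E2"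
    using assms(1) unfolding tourn_iso_def by blast
  have "bij_betw \<pi> {v \<in> V1. (u, v) \<in> E1} {w \<in> V2. (\<pi> u, w) \<in> E2}"
    using \<pi> assms(3) unfolding bij_betw_def inj_on_def by auto
  then have "out_degree V1 E1 u = out_degree V2 E2 (\<pi> u)"
    unfolding out_degree_def by (rule bij_betw_same_card)
  then show ?thesis
    using assms(2,3) \<pi>(1) bij_betw_apply by metis
qed

text \<open>Games of \<open>A\<close> against \<open>V - A\<close> won in \<open>E\<close> but lost after the reversal are reversed
  edges, and only \<open>|A| d - |A|(|A| - 1)/2\<close> of them are still won.\<close>

lemma card_reversed_edges_lower_bound:
  assumes tour: "tournament V (reverse_edges E F)" and "A \<subseteq> V"
    and cross: "A \<times> (V - A) \<subseteq> E"
    and deg: "\<forall>u\<in>A. out_degree V (reverse_edges E F) u = d"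
  shows "2 * card A * card (V - A) + card A * (card A - 1) \<le> 2 * card F + 2 * card A * d"
proof -
  let ?E' = "reverse_edges E F"
  have "finite V" and "?E' \<subseteq> V \<times> V"
    using tour unfolding tournament_def by auto
  then have "finite ?E'"
    by (meson finite_SigmaI finite_subset)
  then have "finite F"
    unfolding reverse_edges_def by (metis finite_Un finite_converse)
  have "A \<times> (V - A) \<subseteq> F \<union> (?E' \<inter> A \<times> (V - A))"
    using cross unfolding reverse_edges_def by blast
  then have "card (A \<times> (V - A)) \<le> card F + card (?E' \<inter> A \<times> (V - A))"
    using \<open>finite F\<close> \<open>finite ?E'\<close> by (meson card_Un_le card_mono finite_Int finite_UnI order_trans)
  moreover have "card A * d = card (?E' \<inter> A \<times> A) + card (?E' \<inter> A \<times> (V - A))"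
    using sum_out_degree_eq[OF \<open>finite V\<close> \<open>A \<subseteq> V\<close>, of ?E'] deg by simp
  moreover have "2 * card (?E' \<inter> A \<times> A) = card A * (card A - 1)"
    using tournament_card_edges_within[OF tour \<open>A \<subseteq> V\<close>] .
  ultimately show ?thesis
    by (simp add: card_cartesian_product)
qed

lemma tournament_T_ord: "tournament (T_ord_V n) (T_ord_E n)"
  unfolding tournament_def T_ord_V_def T_ord_E_def by auto

lemma T_rps_E_iff:
  assumes "a < 2 * m + 1" and "b < 2 * m + 1"
  shows "(a, b) \<in> T_rps_E (2 * m + 1) \<longleftrightarrow> (a < b \<and> b \<le> a + m) \<or> (b < a \<and> b + m < a)"
proof
  assume "(a, b) \<in> T_rps_E (2 * m + 1)"
  then obtain k where k: "b = (a + k) mod (2 * m + 1)" "1 \<le> k" "k \<le> m"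
    unfolding T_rps_E_def by auto
  then show "(a < b \<and> b \<le> a + m) \<or> (b < a \<and> b + m < a)"
    using assms by (cases "a + k < 2 * m + 1") (auto simp: mod_if)
next
  assume "(a < b \<and> b \<le> a + m) \<or> (b < a \<and> b + m < a)"
  then obtain k where "b = (a + k) mod (2 * m + 1)" "1 \<le> k" "k \<le> m"
  proof (elim disjE conjE)
    assume "a < b" "b \<le> a + m"
    then show ?thesis using that[of "b - a"] assms by simp
  next
    assume "b < a" "b + m < a"
    then show ?thesis using that[of "b + (2 * m + 1) - a"] assms by (simp add: mod_if)
  qed
  then show "(a, b) \<in> T_rps_E (2 * m + 1)"
    unfolding T_rps_E_def using assms by auto
qed

lemma tournament_T_rps: "tournament (T_rps_V (2 * m + 1)) (T_rps_E (2 * m + 1))"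
  unfolding tournament_def T_rps_V_def
proof (intro conjI ballI impI)
  show "T_rps_E (2 * m + 1) \<subseteq> {0..<2 * m + 1} \<times> {0..<2 * m + 1}"
    unfolding T_rps_E_def by auto
next
  fix u v assume "u \<in> {0..<2 * m + 1}" "v \<in> {0..<2 * m + 1}" "u \<noteq> v"
  then have uv: "u < 2 * m + 1" "v < 2 * m + 1" and "u \<noteq> v"
    by auto
  then show "(u, v) \<in> T_rps_E (2 * m + 1) \<longleftrightarrow> (v, u) \<notin> T_rps_E (2 * m + 1)"
    unfolding T_rps_E_iff[OF uv] T_rps_E_iff[OF uv(2,1)] by arith
next
  fix u assume "u \<in> {0..<2 * m + 1}"
  then have "u < 2 * m + 1"
    by simp
  then show "(u, u) \<notin> T_rps_E (2 * m + 1)"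
    unfolding T_rps_E_iff[OF \<open>u < 2 * m + 1\<close> \<open>u < 2 * m + 1\<close>] by simp
qed simp

lemma out_degree_T_rps:
  assumes "a \<in> T_rps_V (2 * m + 1)"
  shows "out_degree (T_rps_V (2 * m + 1)) (T_rps_E (2 * m + 1)) a = m"
proof -
  have "{b \<in> T_rps_V (2 * m + 1). (a, b) \<in> T_rps_E (2 * m + 1)} = (\<lambda>k. (a + k) mod (2 * m + 1)) ` {1..m}"
    using assms unfolding T_rps_V_def T_rps_E_def by auto
  moreover have "inj_on (\<lambda>k. (a + k) mod (2 * m + 1)) {1..m}"
    using assms unfolding T_rps_V_def by (auto intro!: inj_onI simp: mod_if split: if_splits)
  ultimately show ?thesis
    unfolding out_degree_def by (simp add: card_image)
qed

lemma card_reversed_edges_T_ord_T_rps_ge: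
  assumes "F \<subseteq> T_ord_E (2 * m + 1)"
    and iso: "tourn_iso (T_ord_V (2 * m + 1)) (reverse_edges (T_ord_E (2 * m + 1)) F)
      (T_rps_V (2 * m + 1)) (T_rps_E (2 * m + 1))"
  shows "m * (m + 1) \<le> 2 * card F"
proof -
  let ?V = "T_ord_V (2 * m + 1)" and ?E' = "reverse_edges (T_ord_E (2 * m + 1)) F"
  have "?E' \<subseteq> ?V \<times> ?V"
    using assms(1) tournament_T_ord[of "2 * m + 1"]
    unfolding reverse_edges_def tournament_def by blast
  then have tour: "tournament ?V ?E'"
    using tournament_if_tourn_iso[OF iso tournament_T_rps] by blast
  have deg: "\<forall>u\<in>{1..m}. out_degree ?V ?E' u = m"
    using out_degree_if_tourn_iso[OF iso] out_degree_T_rps unfolding T_ord_V_def by auto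
  have "?V - {1..m} = {m + 1..2 * m + 1}"
    unfolding T_ord_V_def by auto
  moreover have "{1..m} \<times> (?V - {1..m}) \<subseteq> T_ord_E (2 * m + 1)"
    unfolding T_ord_V_def T_ord_E_def by auto
  ultimately have "2 * m * (m + 1) + m * (m - 1) \<le> 2 * card F + 2 * m * m"
    using card_reversed_edges_lower_bound[OF tour _ _ deg] unfolding T_ord_V_def by simp
  moreover have "m * (m - 1) + m = m * m"
    by (cases m) auto
  ultimately show ?thesis
    by (simp add: algebra_simps)
qed

definition long_edges :: "nat \<Rightarrow> (nat \<times> nat) set" where
  "long_edges m = {(i, j) \<in> T_ord_E (2 * m + 1). i + m < j}"

lemma card_long_edges: "2 * card (long_edges m) = m * (m + 1)"
proof -
  have "long_edges m = (\<lambda>(i, j). (i, j + m)) ` T_ord_E (m + 1)"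
  proof
    show "long_edges m \<subseteq> (\<lambda>(i, j). (i, j + m)) ` T_ord_E (m + 1)"
    proof
      fix e assume "e \<in> long_edges m"
      then obtain i j where "e = (i, j)" "1 \<le> i" "i + m < j" "j \<le> 2 * m + 1"
        unfolding long_edges_def T_ord_E_def by auto
      then have "(i, j - m) \<in> T_ord_E (m + 1)" "e = (\<lambda>(i, j). (i, j + m)) (i, j - m)"
        unfolding T_ord_E_def by auto
      then show "e \<in> (\<lambda>(i, j). (i, j + m)) ` T_ord_E (m + 1)"
        by blast
    qed
  qed (auto simp: long_edges_def T_ord_E_def)
  moreover have "inj_on (\<lambda>(i, j). (i, j + m)) (T_ord_E (m + 1))"
    by (auto simp: inj_on_def)
  moreover have "T_ord_E (m + 1) = T_ord_E (m + 1) \<inter> T_ord_V (m + 1) \<times> T_ord_V (m + 1)"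
    unfolding T_ord_E_def T_ord_V_def by auto
  ultimately show ?thesis
    using tournament_card_edges_within[OF tournament_T_ord, of "T_ord_V (m + 1)" "m + 1"]
    by (simp add: card_image T_ord_V_def)
qed

lemma tourn_iso_reverse_long_edges:
  "tourn_iso (T_ord_V (2 * m + 1)) (reverse_edges (T_ord_E (2 * m + 1)) (long_edges m))
    (T_rps_V (2 * m + 1)) (T_rps_E (2 * m + 1))"
  unfolding tourn_iso_def
proof (intro exI conjI)
  show "bij_betw (\<lambda>i. i - 1) (T_ord_V (2 * m + 1)) (T_rps_V (2 * m + 1))"
    unfolding T_ord_V_def T_rps_V_def by (rule bij_betw_byWitness[where f' = Suc]) auto
  show "\<forall>u\<in>T_ord_V (2 * m + 1). \<forall>v\<in>T_ord_V (2 * m + 1).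
      (u, v) \<in> reverse_edges (T_ord_E (2 * m + 1)) (long_edges m) \<longleftrightarrow>
      (u - 1, v - 1) \<in> T_rps_E (2 * m + 1)"
  proof (intro ballI)
    fix u v assume "u \<in> T_ord_V (2 * m + 1)" "v \<in> T_ord_V (2 * m + 1)"
    then have uv: "u - 1 < 2 * m + 1" "v - 1 < 2 * m + 1" and "u \<in> {1..2 * m + 1}" "v \<in> {1..2 * m + 1}"
      unfolding T_ord_V_def by auto
    then show "(u, v) \<in> reverse_edges (T_ord_E (2 * m + 1)) (long_edges m) \<longleftrightarrow>
        (u - 1, v - 1) \<in> T_rps_E (2 * m + 1)"
      unfolding T_rps_E_iff[OF uv] reverse_edges_def long_edges_def T_ord_E_def by auto
  qed
qed

lemma d_GED_eqI:
  assumes "F0 \<subseteq> E1" and "tourn_iso V1 (reverse_edges E1 F0) V2 E2"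
    and "\<And>F. F \<subseteq> E1 \<Longrightarrow> tourn_iso V1 (reverse_edges E1 F) V2 E2 \<Longrightarrow> card F0 \<le> card F"
  shows "d_GED V1 E1 V2 E2 = card F0"
  unfolding d_GED_def using assms by (intro Least_equality) blast+

lemma d_GED_T_ord_T_rps:
  "d_GED (T_ord_V (2 * m + 1)) (T_ord_E (2 * m + 1)) (T_rps_V (2 * m + 1)) (T_rps_E (2 * m + 1))
    = card (long_edges m)"
proof (rule d_GED_eqI)
  show "long_edges m \<subseteq> T_ord_E (2 * m + 1)"
    unfolding long_edges_def by blast
  show "tourn_iso (T_ord_V (2 * m + 1)) (reverse_edges (T_ord_E (2 * m + 1)) (long_edges m))
      (T_rps_V (2 * m + 1)) (T_rps_E (2 * m + 1))"
    by (rule tourn_iso_reverse_long_edges)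
next
  fix F assume "F \<subseteq> T_ord_E (2 * m + 1)" and "tourn_iso (T_ord_V (2 * m + 1))
      (reverse_edges (T_ord_E (2 * m + 1)) F) (T_rps_V (2 * m + 1)) (T_rps_E (2 * m + 1))"
  then have "m * (m + 1) \<le> 2 * card F"
    by (rule card_reversed_edges_T_ord_T_rps_ge)
  then show "card (long_edges m) \<le> card F"
    using card_long_edges[of m] by simp
qed

theorem proposition1:
  fixes n :: nat
  assumes "odd n" and "n > 0"
  shows "8 * d_GED (T_ord_V n) (T_ord_E n) (T_rps_V n) (T_rps_E n) = n ^ 2 - 1"
proof -
  obtain m where n: "n = 2 * m + 1"
    using assms(1) oddE by blast
  have "n ^ 2 - 1 = 4 * (m * (m + 1))"
    unfolding n by (simp add: power2_eq_square algebra_simps)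
  then show ?thesis
    using d_GED_T_ord_T_rps[of m] card_long_edges[of m] unfolding n by simp
qed

end
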